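(* Let $U:\mathbb{R}^d\to\mathbb{R}$ be twice continuously differentiable with $\nabla U(0)=0$ and $\sup_x\|\mathrm{D}^2U(x)\|\le\mathtt{L}$, and assume there exist $\mathtt{m}>0$, $\mathtt{K}\ge0$ with $\mathrm{D}^2U(x)[y,y]\ge\mathtt{m}$ whenever $\|x\|\ge\mathtt{K}$, $\|y\|=1$. Let $\bar\gamma\in(0,\mathtt{m}^3/(4\mathtt{L}^4)]$, $\epsilon=(\mathtt{m}^3/2^4)\{2^{1/2}\mathtt{L}^2+2^{-3/2}\bar\gamma^{1/2}\mathtt{L}^3\}^{-1}$ and $$C_{2,\bar\gamma}=2\mathtt{L}+2^{1/2}\mathtt{L}^2\epsilon^{-1}+(\bar\gamma/2)\mathtt{L}^2+2^{-3/2}\bar\gamma^{3/2}\mathtt{L}^3\epsilon^{-1}.$$ Let $\tilde{\mathtt{K}}=2\mathtt{K}(1+\mathtt{L}/\mathtt{m})$. Then for all $\gamma\in(0,\bar\gamma]$ and $x,z\in\mathbb{R}^d$ with $\|x\|\ge\max(2\mathtt{K},\tilde{\mathtt{K}})$ and $\|z\|\le\|x\|/(4\sqrt{2\gamma})$, $$\tau_\gamma(x,z)\le C_{2,\bar\gamma}\gamma\|z\|^2.$$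
   Context: For $\gamma>0$ and $x,z\in\mathbb{R}^d$, $\tau_\gamma(x,z)=U(x-\gamma\nabla U(x)+\sqrt{2\gamma}z)-U(x)+\frac12\big\{\|z-(\gamma/2)^{1/2}[\nabla U(x)+\nabla U(x-\gamma\nabla U(x)+\sqrt{2\gamma}z)]\|^2-\|z\|^2\big\}$. *)

theory Defs
  imports "HOL-Analysis.Analysis"
begin

text \<open>The quantity tau_gamma(x,z) of the paper; U is the potential and gU its gradient.\<close>
definition tau :: "('a::euclidean_space \<Rightarrow> real) \<Rightarrow> ('a \<Rightarrow> 'a) \<Rightarrow> real \<Rightarrow> 'a \<Rightarrow> 'a \<Rightarrow> real" where
  "tau U gU \<gamma> x z =
     (let y = x - \<gamma> *\<^sub>R gU x + sqrt (2 * \<gamma>) *\<^sub>R z in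
      U y - U x + (1/2) * ((norm (z - sqrt (\<gamma> / 2) *\<^sub>R (gU x + gU y)))\<^sup>2 - (norm z)\<^sup>2))"

end

theory Submission
  imports Defs
begin

text \<open>
  Write \<open>y = x + d\<close> with \<open>d = -\<gamma> \<nabla>U(x) + \<surd>(2\<gamma>) z\<close>. For \<open>\<parallel>x\<parallel> \<ge> 2K\<close> the step is short,
  \<open>\<parallel>d\<parallel> \<le> \<parallel>x\<parallel>/2\<close>, so the segment \<open>[x, y]\<close> stays outside the ball of radius \<open>K\<close>, where \<open>U\<close> is
  \<open>m\<close>-strongly convex; hence \<open>U(y) - U(x) \<le> \<nabla>U(y)\<cdot>d - (m/2)\<parallel>d\<parallel>\<^sup>2\<close>. Expanding the square
  in \<open>\<tau>\<^sub>\<gamma>\<close>, everything except this convexity gap collapses to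
  \<open>(\<gamma>/2)\<^sup>1\<^sup>/\<^sup>2 z\<cdot>(\<nabla>U(y) - \<nabla>U(x)) + (\<gamma>/4)\<parallel>\<nabla>U(y) - \<nabla>U(x)\<parallel>\<^sup>2\<close>, which the \<open>L\<close>-Lipschitz
  gradient bounds in terms of \<open>\<parallel>z\<parallel> \<parallel>d\<parallel>\<close> and \<open>\<parallel>d\<parallel>\<^sup>2\<close>. Absorbing both into \<open>(m/2)\<parallel>d\<parallel>\<^sup>2\<close>
  by AM-GM leaves \<open>\<tau>\<^sub>\<gamma>(x, z) \<le> (L\<^sup>2/(2m)) \<gamma> \<parallel>z\<parallel>\<^sup>2\<close>, and \<open>L\<^sup>2/(2m) \<le> C\<^sub>2\<^sub>,\<^sub>\<gamma>\<^sub>b\<^sub>a\<^sub>r\<close>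
  because \<open>m \<le> L\<close>.
\<close>

lemma curvature_le_hessian_bound:
  fixes H :: "'a::euclidean_space \<Rightarrow> 'a \<Rightarrow>\<^sub>L 'a"
  assumes convex_out: "\<And>x y. norm x \<ge> K \<Longrightarrow> norm y = 1 \<Longrightarrow> y \<bullet> H x y \<ge> m"
    and Lbound: "\<And>x. norm (H x) \<le> L"
    and "K \<ge> 0"
  shows "m \<le> L"
proof -
  obtain e :: 'a where "e \<in> Basis" using nonempty_Basis by blast
  then have e: "norm e = 1" by simp
  define p where "p = K *\<^sub>R e"
  have "m \<le> e \<bullet> H p e" using convex_out e \<open>K \<ge> 0\<close> by (simp add: p_def)
  also have "\<dots> \<le> norm (H p e)" using norm_cauchy_schwarz[of e "H p e"] e by simp
  also have "\<dots> \<le> norm (H p)" using norm_blinfun[of "H p" e] e by simp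
  also have "\<dots> \<le> L" by (rule Lbound)
  finally show ?thesis .
qed

lemma lipschitz_of_bounded_derivative:
  fixes f :: "'a::real_normed_vector \<Rightarrow> 'b::real_normed_vector"
    and f' :: "'a \<Rightarrow> 'a \<Rightarrow>\<^sub>L 'b"
  assumes "\<And>x. (f has_derivative blinfun_apply (f' x)) (at x)"
    and "\<And>x. norm (f' x) \<le> L"
  shows "norm (f u - f v) \<le> L * norm (u - v)"
  by (rule differentiable_bound[of UNIV f "\<lambda>x. blinfun_apply (f' x)"])
     (auto intro: has_derivative_at_withinI assms simp: norm_blinfun.rep_eq[symmetric])

lemma quadratic_form_ge_of_unit_bound:
  fixes A :: "'a::real_inner \<Rightarrow>\<^sub>L 'a"
  assumes "\<And>u. norm u = 1 \<Longrightarrow> m \<le> u \<bullet> A u"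
  shows "m * (norm d)\<^sup>2 \<le> d \<bullet> A d"
proof (cases "d = 0")
  case True
  then show ?thesis by (simp add: blinfun.zero_right)
next
  case False
  let ?u = "(1 / norm d) *\<^sub>R d"
  have "m \<le> ?u \<bullet> A ?u" using False by (intro assms) simp
  also have "?u \<bullet> A ?u = (d \<bullet> A d) / (norm d)\<^sup>2"
    by (simp add: blinfun.scaleR_right power2_eq_square)
  finally show ?thesis using False by (simp add: field_simps)
qed

lemma has_real_derivative_along_line:
  fixes f :: "'a::real_normed_vector \<Rightarrow> real"
  assumes "(f has_derivative f') (at (p + t *\<^sub>R d))"
  shows "((\<lambda>s. f (p + s *\<^sub>R d)) has_real_derivative f' d) (at t)"
proof -
  have "((\<lambda>s. p + s *\<^sub>R d) has_derivative (\<lambda>h. h *\<^sub>R d)) (at t)"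
    by (auto intro!: derivative_eq_intros)
  from has_derivative_compose[OF this assms]
  have "((\<lambda>s. f (p + s *\<^sub>R d)) has_derivative (\<lambda>h. f' (h *\<^sub>R d))) (at t)" .
  moreover have "(\<lambda>h. f' (h *\<^sub>R d)) = (*) (f' d)"
    using has_derivative_bounded_linear[OF assms] by (simp add: fun_eq_iff linear_simps)
  ultimately show ?thesis
    unfolding has_field_derivative_def by simp
qed

text \<open>
  The gap \<open>\<phi>\<close> between \<open>t \<mapsto> U(p + t d)\<close> and its quadratic minorant has derivative
  \<open>\<psi>\<close>, which is nondecreasing with \<open>\<psi> 0 = 0\<close>.
\<close>
lemma strongly_convex_along_segment:
  fixes U :: "'a::real_inner \<Rightarrow> real" and gU :: "'a \<Rightarrow> 'a"
    and H :: "'a \<Rightarrow> 'a \<Rightarrow>\<^sub>L 'a"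
  assumes grad: "\<And>x. (U has_derivative (\<lambda>h. gU x \<bullet> h)) (at x)"
    and hess: "\<And>x. (gU has_derivative blinfun_apply (H x)) (at x)"
    and curv: "\<And>t. 0 \<le> t \<Longrightarrow> t \<le> 1 \<Longrightarrow> m * (norm d)\<^sup>2 \<le> d \<bullet> H (p + t *\<^sub>R d) d"
  shows "U p + gU p \<bullet> d + m / 2 * (norm d)\<^sup>2 \<le> U (p + d)"
proof -
  define c where "c = m * (norm d)\<^sup>2"
  define \<psi> where "\<psi> t = gU (p + t *\<^sub>R d) \<bullet> d - gU p \<bullet> d - t * c" for t
  define \<phi> where "\<phi> t = U (p + t *\<^sub>R d) - U p - t * (gU p \<bullet> d) - t\<^sup>2 * (c / 2)" for t
  have dU: "((\<lambda>t. U (p + t *\<^sub>R d)) has_real_derivative gU (p + t *\<^sub>R d) \<bullet> d) (at t)" for t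
    by (rule has_real_derivative_along_line[OF grad])
  have dgU: "((\<lambda>t. gU (p + t *\<^sub>R d) \<bullet> d) has_real_derivative d \<bullet> H (p + t *\<^sub>R d) d) (at t)" for t
    using has_real_derivative_along_line[OF has_derivative_inner_left[OF hess[of "p + t *\<^sub>R d"]], of d]
    by (simp add: inner_commute)
  have d\<psi>: "(\<psi> has_real_derivative d \<bullet> H (p + t *\<^sub>R d) d - c) (at t)" for t
    using DERIV_diff[OF DERIV_diff[OF dgU DERIV_const]
                        DERIV_cmult_right[OF DERIV_ident, where c = c]]
    by (simp add: \<psi>_def[abs_def])
  have d\<phi>: "(\<phi> has_real_derivative \<psi> t) (at t)" for t
    using DERIV_diff[OF DERIV_diff[OF DERIV_diff[OF dU DERIV_const]
                                       DERIV_cmult_right[OF DERIV_ident, where c = "gU p \<bullet> d"]]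
                        DERIV_cmult_right[OF DERIV_pow[of 2], where c = "c / 2"]]
    by (simp add: \<phi>_def[abs_def] \<psi>_def)
  have \<psi>_nonneg: "0 \<le> \<psi> t" if "0 \<le> t" "t \<le> 1" for t
  proof -
    have "\<psi> 0 \<le> \<psi> t"
    proof (rule DERIV_nonneg_imp_nondecreasing[OF \<open>0 \<le> t\<close>])
      fix s assume "0 \<le> s" "s \<le> t"
      with that have "c \<le> d \<bullet> H (p + s *\<^sub>R d) d"
        unfolding c_def by (intro curv) simp_all
      then show "\<exists>y. (\<psi> has_real_derivative y) (at s) \<and> 0 \<le> y"
        by (intro exI[of _ "d \<bullet> H (p + s *\<^sub>R d) d - c"] conjI d\<psi>) simp
    qed
    then show ?thesis by (simp add: \<psi>_def)
  qed
  have "\<phi> 0 \<le> \<phi> 1"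
  proof (rule DERIV_nonneg_imp_nondecreasing[of 0 1])
    fix s :: real assume "0 \<le> s" "s \<le> 1"
    then show "\<exists>y. (\<phi> has_real_derivative y) (at s) \<and> 0 \<le> y"
      using d\<phi> \<psi>_nonneg by blast
  qed simp
  then show ?thesis by (simp add: \<phi>_def c_def)
qed

lemma inner_step_identity:
  fixes gx gy z :: "'a::real_inner"
  assumes "a * a = \<gamma> / 2"
  shows "gy \<bullet> (- \<gamma> *\<^sub>R gx + (2 * a) *\<^sub>R z) + (1/2) * ((norm (z - a *\<^sub>R (gx + gy)))\<^sup>2 - (norm z)\<^sup>2)
       = a * (z \<bullet> (gy - gx)) + \<gamma> / 4 * (norm (gy - gx))\<^sup>2"
proof -
  have "gy \<bullet> (- \<gamma> *\<^sub>R gx + (2 * a) *\<^sub>R z) + (1/2) * ((norm (z - a *\<^sub>R (gx + gy)))\<^sup>2 - (norm z)\<^sup>2)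
      = - \<gamma> * (gx \<bullet> gy) + a * (z \<bullet> gy) - a * (z \<bullet> gx)
        + (a * a) / 2 * (gx \<bullet> gx + 2 * (gx \<bullet> gy) + gy \<bullet> gy)"
    unfolding power2_norm_eq_inner
    by (simp add: inner_diff_left inner_diff_right inner_add_left inner_add_right inner_commute
        algebra_simps)
  also have "\<dots> = a * (z \<bullet> (gy - gx)) + \<gamma> / 4 * (norm (gy - gx))\<^sup>2"
    unfolding power2_norm_eq_inner assms
    by (simp add: inner_diff_left inner_diff_right inner_commute algebra_simps)
  finally show ?thesis .
qed

lemma tau_le_of_convexity_gap:
  fixes U :: "'a::euclidean_space \<Rightarrow> real" and gU :: "'a \<Rightarrow> 'a" and x z :: 'a
    and \<gamma> L m :: real
  defines "y \<equiv> x - \<gamma> *\<^sub>R gU x + sqrt (2 * \<gamma>) *\<^sub>R z"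
  assumes lip: "\<And>u v. norm (gU u - gU v) \<le> L * norm (u - v)"
    and "0 < \<gamma>" "0 < m" "\<gamma> * L\<^sup>2 \<le> m"
    and gap: "U y - U x \<le> gU y \<bullet> (y - x) - m / 2 * (norm (y - x))\<^sup>2"
  shows "tau U gU \<gamma> x z \<le> L\<^sup>2 / (2 * m) * \<gamma> * (norm z)\<^sup>2"
proof -
  define a where "a = sqrt (\<gamma> / 2)"
  define t where "t = norm (y - x)"
  define w where "w = norm z"
  define \<Delta> where "\<Delta> = (1/2) * ((norm (z - a *\<^sub>R (gU x + gU y)))\<^sup>2 - (norm z)\<^sup>2)"
  have a: "a * a = \<gamma> / 2" "0 \<le> a" using \<open>0 < \<gamma>\<close> by (simp_all add: a_def)
  have "sqrt (2 * \<gamma>) = sqrt 4 * a" unfolding a_def real_sqrt_mult[symmetric] by simp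
  then have step: "y - x = - \<gamma> *\<^sub>R gU x + (2 * a) *\<^sub>R z" by (simp add: y_def)
  have lip_step: "norm (gU y - gU x) \<le> L * t" using lip by (simp add: t_def)
  have cross: "a * (z \<bullet> (gU y - gU x)) \<le> a * (w * (L * t))"
  proof -
    have "z \<bullet> (gU y - gU x) \<le> w * (L * t)"
      using norm_cauchy_schwarz[of z "gU y - gU x"] mult_left_mono[OF lip_step norm_ge_zero[of z]]
      unfolding w_def by linarith
    then show ?thesis using a(2) by (rule mult_left_mono)
  qed
  have quad: "\<gamma> / 4 * (norm (gU y - gU x))\<^sup>2 \<le> m / 4 * t\<^sup>2"
  proof -
    have "(norm (gU y - gU x))\<^sup>2 \<le> L\<^sup>2 * t\<^sup>2"
      using power_mono[OF lip_step norm_ge_zero] by (simp add: power_mult_distrib)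
    then have "\<gamma> * (norm (gU y - gU x))\<^sup>2 \<le> (\<gamma> * L\<^sup>2) * t\<^sup>2"
      using \<open>0 < \<gamma>\<close> by (simp add: mult_left_mono mult.assoc)
    also have "\<dots> \<le> m * t\<^sup>2" using \<open>\<gamma> * L\<^sup>2 \<le> m\<close> by (simp add: mult_right_mono)
    finally show ?thesis by simp
  qed
  \<comment> \<open>AM-GM absorbs the cross term into the convexity gap.\<close>
  have amgm: "a * (w * (L * t)) \<le> m / 4 * t\<^sup>2 + (a * L * w)\<^sup>2 / m"
  proof -
    have "0 \<le> (m * t / 2 - a * L * w)\<^sup>2 / m" using \<open>0 < m\<close> by simp
    also have "\<dots> = m / 4 * t\<^sup>2 - a * (w * (L * t)) + (a * L * w)\<^sup>2 / m"
      using \<open>0 < m\<close> by (simp add: power2_eq_square field_simps)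
    finally show ?thesis by linarith
  qed
  have "tau U gU \<gamma> x z = U y - U x + \<Delta>"
    unfolding tau_def Let_def y_def a_def \<Delta>_def ..
  also have "\<dots> \<le> gU y \<bullet> (y - x) + \<Delta> - m / 2 * t\<^sup>2"
    using gap by (simp add: t_def)
  also have "gU y \<bullet> (y - x) + \<Delta> = a * (z \<bullet> (gU y - gU x)) + \<gamma> / 4 * (norm (gU y - gU x))\<^sup>2"
    unfolding step \<Delta>_def by (rule inner_step_identity[OF a(1)])
  also have "\<dots> - m / 2 * t\<^sup>2 \<le> (a * L * w)\<^sup>2 / m"
    using cross quad amgm by linarith
  also have "\<dots> = L\<^sup>2 / (2 * m) * \<gamma> * (norm z)\<^sup>2"
    using a(1) \<open>0 < m\<close> by (simp add: w_def power2_eq_square field_simps)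
  finally show ?thesis .
qed

lemma tau_le_far_from_origin:
  fixes U :: "'a::euclidean_space \<Rightarrow> real" and gU :: "'a \<Rightarrow> 'a"
    and H :: "'a \<Rightarrow> 'a \<Rightarrow>\<^sub>L 'a"
  assumes grad: "\<And>x. (U has_derivative (\<lambda>h. gU x \<bullet> h)) (at x)"
    and hess: "\<And>x. (gU has_derivative blinfun_apply (H x)) (at x)"
    and convex_out: "\<And>x y. norm x \<ge> K \<Longrightarrow> norm y = 1 \<Longrightarrow> y \<bullet> H x y \<ge> m"
    and lip: "\<And>u v. norm (gU u - gU v) \<le> L * norm (u - v)"
    and "gU 0 = 0" "0 < m" "0 < \<gamma>" "\<gamma> * L \<le> 1 / 4" "\<gamma> * L\<^sup>2 \<le> m"
    and "2 * K \<le> norm x" "norm z \<le> norm x / (4 * sqrt (2 * \<gamma>))"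
  shows "tau U gU \<gamma> x z \<le> L\<^sup>2 / (2 * m) * \<gamma> * (norm z)\<^sup>2"
proof -
  define y where "y = x - \<gamma> *\<^sub>R gU x + sqrt (2 * \<gamma>) *\<^sub>R z"
  define d where "d = x - y"
  have "norm d \<le> \<gamma> * norm (gU x) + sqrt (2 * \<gamma>) * norm z"
    using norm_triangle_ineq4[of "\<gamma> *\<^sub>R gU x" "sqrt (2 * \<gamma>) *\<^sub>R z"] \<open>0 < \<gamma>\<close>
    by (simp add: d_def y_def)
  also have "\<gamma> * norm (gU x) \<le> (\<gamma> * L) * norm x"
    using lip[of x 0] \<open>gU 0 = 0\<close> \<open>0 < \<gamma>\<close> by (simp add: mult_left_mono mult.assoc)
  also have "(\<gamma> * L) * norm x \<le> norm x / 4"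
    using mult_right_mono[OF \<open>\<gamma> * L \<le> 1 / 4\<close> norm_ge_zero[of x]] by simp
  also have "sqrt (2 * \<gamma>) * norm z \<le> norm x / 4"
    using \<open>norm z \<le> norm x / (4 * sqrt (2 * \<gamma>))\<close> \<open>0 < \<gamma>\<close> by (simp add: field_simps)
  finally have short: "norm d \<le> norm x / 2" by simp
  have "m * (norm d)\<^sup>2 \<le> d \<bullet> H (y + t *\<^sub>R d) d" if "0 \<le> t" "t \<le> 1" for t
  proof (rule quadratic_form_ge_of_unit_bound[OF convex_out])
    have "norm ((1 - t) *\<^sub>R d) \<le> norm d" using that by (simp add: mult_left_le_one_le)
    then have "norm x - norm d \<le> norm (x - (1 - t) *\<^sub>R d)"
      using norm_triangle_ineq2[of x "(1 - t) *\<^sub>R d"] by linarith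
    moreover have "y + t *\<^sub>R d = x - (1 - t) *\<^sub>R d" by (simp add: d_def algebra_simps)
    ultimately show "K \<le> norm (y + t *\<^sub>R d)" using short \<open>2 * K \<le> norm x\<close> by simp
  qed
  from strongly_convex_along_segment[OF grad hess this]
  have "U y - U x \<le> gU y \<bullet> (y - x) - m / 2 * (norm (y - x))\<^sup>2"
    by (simp add: d_def norm_minus_commute inner_diff_right)
  then show ?thesis
    using tau_le_of_convexity_gap[OF lip \<open>0 < \<gamma>\<close> \<open>0 < m\<close> \<open>\<gamma> * L\<^sup>2 \<le> m\<close>] by (simp add: y_def)
qed

lemma step_size_bounds:
  fixes \<gamma> m L :: real
  assumes "0 < m" "m \<le> L" "0 < \<gamma>" "\<gamma> \<le> m ^ 3 / (4 * L ^ 4)"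
  shows "\<gamma> * L \<le> 1 / 4" and "\<gamma> * L\<^sup>2 \<le> m / 4"
proof -
  have "L > 0" using assms by simp
  have \<gamma>L4: "\<gamma> * L ^ 4 \<le> m ^ 3 / 4"
    using mult_right_mono[OF \<open>\<gamma> \<le> m ^ 3 / (4 * L ^ 4)\<close>, of "L ^ 4"] \<open>L > 0\<close> by simp
  have "m ^ 2 \<le> L ^ 2" "m ^ 3 \<le> L ^ 3"
    using assms by (simp_all add: power_mono)
  have "(\<gamma> * L) * L ^ 3 = \<gamma> * L ^ 4" by algebra
  also have "\<dots> \<le> (1 / 4) * L ^ 3" using \<gamma>L4 \<open>m ^ 3 \<le> L ^ 3\<close> by simp
  finally show "\<gamma> * L \<le> 1 / 4" using \<open>L > 0\<close> by simp
  have "(\<gamma> * L\<^sup>2) * L\<^sup>2 = \<gamma> * L ^ 4" by algebra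
  also have "\<dots> \<le> (m / 4) * m\<^sup>2" using \<gamma>L4 by (simp add: power2_eq_square power3_eq_cube)
  also have "\<dots> \<le> (m / 4) * L\<^sup>2" using \<open>m ^ 2 \<le> L ^ 2\<close> \<open>0 < m\<close> by simp
  finally show "\<gamma> * L\<^sup>2 \<le> m / 4" using \<open>L > 0\<close> by simp
qed

lemma constant_C2_ge:
  fixes m L \<gamma>bar :: real
  assumes "0 < m" "m \<le> L" "0 < \<gamma>bar"
  defines "\<epsilon> \<equiv> (m ^ 3 / 2 ^ 4) / (sqrt 2 * L\<^sup>2 + 2 powr (-3/2) * sqrt \<gamma>bar * L ^ 3)"
  shows "L\<^sup>2 / (2 * m) \<le> 2 * L + sqrt 2 * L\<^sup>2 / \<epsilon> + (\<gamma>bar / 2) * L\<^sup>2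
            + 2 powr (-3/2) * \<gamma>bar powr (3/2) * L ^ 3 / \<epsilon>"
proof -
  define D where "D = sqrt 2 * L\<^sup>2 + 2 powr (-3/2) * sqrt \<gamma>bar * L ^ 3"
  have "L > 0" using assms by simp
  have D: "sqrt 2 * L\<^sup>2 \<le> D" "0 < D" using \<open>L > 0\<close> \<open>0 < \<gamma>bar\<close>
    by (auto simp: D_def intro: add_pos_nonneg)
  have "\<epsilon> > 0"
    unfolding \<epsilon>_def D_def[symmetric] using D \<open>0 < m\<close> by (intro divide_pos_pos) simp_all
  have "L\<^sup>2 * m\<^sup>2 \<le> L\<^sup>2 * L\<^sup>2"
    using \<open>0 < m\<close> \<open>m \<le> L\<close> by (intro mult_left_mono power_mono) auto
  also have "\<dots> \<le> 64 * L ^ 4" using \<open>L > 0\<close> by (simp add: power_numeral_reduce)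
  finally have "L\<^sup>2 * m\<^sup>2 / (2 * m ^ 3) \<le> 64 * L ^ 4 / (2 * m ^ 3)"
    using \<open>0 < m\<close> by (intro divide_right_mono) auto
  then have "L\<^sup>2 / (2 * m) \<le> 32 * L ^ 4 / m ^ 3"
    using \<open>0 < m\<close> by (simp add: power2_eq_square power3_eq_cube)
  also have "32 * L ^ 4 / m ^ 3 = 16 * (sqrt 2 * L\<^sup>2) * (sqrt 2 * L\<^sup>2) / m ^ 3"
    by (simp add: power_numeral_reduce)
  also have "\<dots> \<le> 16 * (sqrt 2 * L\<^sup>2) * D / m ^ 3"
    using D \<open>0 < m\<close> by (intro divide_right_mono mult_left_mono) auto
  also have "\<dots> = sqrt 2 * L\<^sup>2 / \<epsilon>"
    unfolding \<epsilon>_def D_def[symmetric] using D \<open>0 < m\<close> by (simp add: field_simps)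
  finally show ?thesis
    using \<open>L > 0\<close> \<open>\<epsilon> > 0\<close> \<open>0 < \<gamma>bar\<close> by (simp add: add_increasing2 add_increasing)
qed

theorem lemma2:
  fixes U :: "'a::euclidean_space \<Rightarrow> real"
    and gU :: "'a \<Rightarrow> 'a"
    and H :: "'a \<Rightarrow> 'a \<Rightarrow>\<^sub>L 'a"
    and L m K \<gamma>bar :: real
  assumes grad: "\<And>x. (U has_derivative (\<lambda>h. gU x \<bullet> h)) (at x)"
    and hess: "\<And>x. (gU has_derivative blinfun_apply (H x)) (at x)"
    and hess_cont: "continuous_on UNIV H"
    and grad0: "gU 0 = 0"
    and Lbound: "\<And>x. norm (H x) \<le> L"
    and m_pos: "m > 0" and K_nonneg: "K \<ge> 0"
    and convex_out: "\<And>x y. norm x \<ge> K \<Longrightarrow> norm y = 1 \<Longrightarrow> y \<bullet> H x y \<ge> m"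
    and gbar_pos: "\<gamma>bar > 0" and gbar_le: "\<gamma>bar \<le> m ^ 3 / (4 * L ^ 4)"
  shows "let \<epsilon> = (m ^ 3 / 2 ^ 4) / (sqrt 2 * L\<^sup>2 + 2 powr (-3/2) * sqrt \<gamma>bar * L ^ 3);
             C = 2 * L + sqrt 2 * L\<^sup>2 / \<epsilon> + (\<gamma>bar / 2) * L\<^sup>2
                 + 2 powr (-3/2) * \<gamma>bar powr (3/2) * L ^ 3 / \<epsilon>;
             Kt = 2 * K * (1 + L / m)
         in \<forall>\<gamma> x z. 0 < \<gamma> \<and> \<gamma> \<le> \<gamma>bar \<and> norm x \<ge> max (2 * K) Kt
                  \<and> norm z \<le> norm x / (4 * sqrt (2 * \<gamma>))
                \<longrightarrow> tau U gU \<gamma> x z \<le> C * \<gamma> * (norm z)\<^sup>2"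
proof -
  have "m \<le> L" using curvature_le_hessian_bound[OF convex_out Lbound K_nonneg] .
  have lip: "norm (gU u - gU v) \<le> L * norm (u - v)" for u v
    using lipschitz_of_bounded_derivative[OF hess Lbound] .
  define \<epsilon> where "\<epsilon> = (m ^ 3 / 2 ^ 4) / (sqrt 2 * L\<^sup>2 + 2 powr (-3/2) * sqrt \<gamma>bar * L ^ 3)"
  define C where "C = 2 * L + sqrt 2 * L\<^sup>2 / \<epsilon> + (\<gamma>bar / 2) * L\<^sup>2
                 + 2 powr (-3/2) * \<gamma>bar powr (3/2) * L ^ 3 / \<epsilon>"
  have C_ge: "L\<^sup>2 / (2 * m) \<le> C"
    unfolding C_def \<epsilon>_def by (rule constant_C2_ge[OF m_pos \<open>m \<le> L\<close> gbar_pos])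
  show ?thesis
    unfolding Let_def \<epsilon>_def[symmetric] C_def[symmetric]
  proof (intro allI impI, elim conjE)
    fix \<gamma> :: real and x z :: 'a
    assume "0 < \<gamma>" "\<gamma> \<le> \<gamma>bar" and x: "max (2 * K) (2 * K * (1 + L / m)) \<le> norm x"
      and z: "norm z \<le> norm x / (4 * sqrt (2 * \<gamma>))"
    have "\<gamma> \<le> m ^ 3 / (4 * L ^ 4)" using \<open>\<gamma> \<le> \<gamma>bar\<close> gbar_le by linarith
    note step = step_size_bounds[OF m_pos \<open>m \<le> L\<close> \<open>0 < \<gamma>\<close> this]
    have "\<gamma> * L\<^sup>2 \<le> m" "2 * K \<le> norm x" using step(2) m_pos x by simp_all
    from tau_le_far_from_origin[OF grad hess convex_out lip grad0 m_pos \<open>0 < \<gamma>\<close> step(1) this z]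
    have "tau U gU \<gamma> x z \<le> L\<^sup>2 / (2 * m) * \<gamma> * (norm z)\<^sup>2" .
    also have "\<dots> \<le> C * \<gamma> * (norm z)\<^sup>2"
      using C_ge \<open>0 < \<gamma>\<close> by (intro mult_right_mono) simp_all
    finally show "tau U gU \<gamma> x z \<le> C * \<gamma> * (norm z)\<^sup>2" .
  qed
qed

end
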